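(* Let $(\mathbf w,\mathbf b)$ be weights and biases of a PNN with architecture $(\mathbf d,\mathbf r)$, and let $\widetilde{\mathbf w}=(\widetilde W_1,\dots,\widetilde W_L)$ with $\widetilde W_\ell=\begin{bmatrix}W_\ell&\mathbf b_\ell\\0&1\end{bmatrix}$ for $\ell<L$ and $\widetilde W_L=\begin{bmatrix}W_L&\mathbf b_L\end{bmatrix}$. If the hPNN representation $p_{\widetilde{\mathbf w}}$ with architecture $((d_0+1,\dots,d_{L-1}+1,d_L),\mathbf r)$ is unique (as an hPNN, among all unstructured weight tuples of that architecture), then the PNN representation $p_{\mathbf w,\mathbf b}$ is unique.
   Context: Work over $\mathbb R$. $\rho_r(z_1,\dots,z_d)=(z_1^r,\dots,z_d^r)$. A PNN with architecture $(\mathbf d,\mathbf r)$, $\mathbf d=(d_0,\dots,d_L)$, $\mathbf r=(r_1,\dots,r_{L-1})$, weights $W_\ell\in\mathbb R^{d_\ell\times d_{\ell-1}}$ and biases $\mathbf b_\ell\in\mathbb R^{d_\ell}$ is $p_{\mathbf w,\mathbf b}=f_L\circ\rho_{r_{L-1}}\circ\cdots\circ\rho_{r_1}\circ f_1$, $f_\ell(\mathbf x)=W_\ell\mathbf x+\mathbf b_\ell$; an hPNN $p_{\mathbf w}$ is the case of zero biases. Two parameter sets are equivalent if there exist permutation matrices $P_\ell$ and invertible diagonal matrices $D_\ell$ ($\ell=1,\dots,L-1$), $P_0=D_0=P_L=D_L=I$, with $W'_\ell=P_\ell D_\ell W_\ell D_{\ell-1}^{-r_{\ell-1}}P_{\ell-1}^T$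 ($D_0^{-r_0}:=I$) and $\mathbf b'_\ell=P_\ell D_\ell\mathbf b_\ell$ for all $\ell$ (for hPNNs, only the weight condition). A (h)PNN representation is unique if every parameter set of the same architecture defining the same function is equivalent to it. *)

theory Defs
  imports Complex_Main
begin

text \<open>
An architecture is a list of widths d = [d_0,...,d_L] (length L+1, L >= 1)
and a list of exponents r = [r_1,...,r_{L-1}] (0-indexed: r!(l-1) is r_l).
Weights are a list of L matrices, W!(l-1) being W_l, represented as functions
nat => nat => real whose entries (i,j) with i < d_l, j < d_{l-1} are the relevant ones.
Biases are a list of L vectors nat => real, b!(l-1) being b_l, relevant on i < d_l.
Vectors in R^n are functions nat => real; only coordinates < n matter on input,
outputs are zero outside the range.
\<close>

definition layer_apply ::
  "nat list \<Rightarrow> nat list \<Rightarrow> (nat \<Rightarrow> nat \<Rightarrow> real) list \<Rightarrow> (nat \<Rightarrow> real) list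
   \<Rightarrow> nat \<Rightarrow> (nat \<Rightarrow> real) \<Rightarrow> (nat \<Rightarrow> real)" where
  "layer_apply d r W b k v =
     (let u = (\<lambda>i. if i < d ! Suc k then (\<Sum>j<d ! k. (W ! k) i j * v j) + (b ! k) i else 0)
      in if Suc k < length d - 1
         then (\<lambda>i. if i < d ! Suc k then u i ^ (r ! k) else 0)
         else u)"

definition pnn_eval ::
  "nat list \<Rightarrow> nat list \<Rightarrow> (nat \<Rightarrow> nat \<Rightarrow> real) list \<Rightarrow> (nat \<Rightarrow> real) list
   \<Rightarrow> (nat \<Rightarrow> real) \<Rightarrow> (nat \<Rightarrow> real)" where
  "pnn_eval d r W b x = fold (layer_apply d r W b) [0..<length d - 1] x"

definition zero_biases :: "nat list \<Rightarrow> (nat \<Rightarrow> real) list" where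
  "zero_biases d = replicate (length d - 1) (\<lambda>_. 0)"

definition hpnn_eval ::
  "nat list \<Rightarrow> nat list \<Rightarrow> (nat \<Rightarrow> nat \<Rightarrow> real) list \<Rightarrow> (nat \<Rightarrow> real) \<Rightarrow> (nat \<Rightarrow> real)" where
  "hpnn_eval d r W = pnn_eval d r W (zero_biases d)"

text \<open>Equivalence: permutation matrices P_l (P_l e_j = e_{pi l j}) and invertible diagonal
 D_l = diag(c l), with P_0 = D_0 = P_L = D_L = I. The matrix identity
 W'_l = P_l D_l W_l D_{l-1}^{-r_{l-1}} P_{l-1}^T (with D_0^{-r_0} = I) and
 b'_l = P_l D_l b_l are written out entrywise.\<close>
definition pnn_equiv ::
  "nat list \<Rightarrow> nat list \<Rightarrow> (nat \<Rightarrow> nat \<Rightarrow> real) list \<Rightarrow> (nat \<Rightarrow> real) list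
   \<Rightarrow> (nat \<Rightarrow> nat \<Rightarrow> real) list \<Rightarrow> (nat \<Rightarrow> real) list \<Rightarrow> bool" where
  "pnn_equiv d r W b W' b' =
    (let L = length d - 1 in
     \<exists>(\<pi>::nat \<Rightarrow> nat \<Rightarrow> nat) (c::nat \<Rightarrow> nat \<Rightarrow> real).
       (\<forall>i. \<pi> 0 i = i) \<and> (\<forall>i. \<pi> L i = i) \<and> (\<forall>i. c 0 i = 1) \<and> (\<forall>i. c L i = 1) \<and>
       (\<forall>l\<in>{1..<L}. bij_betw (\<pi> l) {..<d ! l} {..<d ! l} \<and> (\<forall>i<d ! l. c l i \<noteq> 0)) \<and>
       (\<forall>l\<in>{1..L}. \<forall>i<d ! l. \<forall>j<d ! (l - 1).
          (W' ! (l - 1)) (\<pi> l i) (\<pi> (l - 1) j)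
            = c l i * (W ! (l - 1)) i j / (if l = 1 then 1 else c (l - 1) j ^ (r ! (l - 2)))) \<and>
       (\<forall>l\<in>{1..L}. \<forall>i<d ! l. (b' ! (l - 1)) (\<pi> l i) = c l i * (b ! (l - 1)) i))"

definition hpnn_equiv ::
  "nat list \<Rightarrow> nat list \<Rightarrow> (nat \<Rightarrow> nat \<Rightarrow> real) list \<Rightarrow> (nat \<Rightarrow> nat \<Rightarrow> real) list \<Rightarrow> bool" where
  "hpnn_equiv d r W W' = pnn_equiv d r W (zero_biases d) W' (zero_biases d)"

definition pnn_unique ::
  "nat list \<Rightarrow> nat list \<Rightarrow> (nat \<Rightarrow> nat \<Rightarrow> real) list \<Rightarrow> (nat \<Rightarrow> real) list \<Rightarrow> bool" where
  "pnn_unique d r W b =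
    (\<forall>W' b'. length W' = length d - 1 \<longrightarrow> length b' = length d - 1 \<longrightarrow>
       (\<forall>x. pnn_eval d r W' b' x = pnn_eval d r W b x) \<longrightarrow> pnn_equiv d r W b W' b')"

definition hpnn_unique ::
  "nat list \<Rightarrow> nat list \<Rightarrow> (nat \<Rightarrow> nat \<Rightarrow> real) list \<Rightarrow> bool" where
  "hpnn_unique d r W =
    (\<forall>W'. length W' = length d - 1 \<longrightarrow>
       (\<forall>x. hpnn_eval d r W' x = hpnn_eval d r W x) \<longrightarrow> hpnn_equiv d r W W')"

definition aug_arch :: "nat list \<Rightarrow> nat list" where
  "aug_arch d = map Suc (butlast d) @ [last d]"

text \<open>Augmented weights: [[W_l, b_l],[0, 1]] for l < L and [W_L, b_L] for l = L.\<close>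
definition aug_weights ::
  "nat list \<Rightarrow> (nat \<Rightarrow> nat \<Rightarrow> real) list \<Rightarrow> (nat \<Rightarrow> real) list \<Rightarrow> (nat \<Rightarrow> nat \<Rightarrow> real) list" where
  "aug_weights d W b = map (\<lambda>k. \<lambda>i j.
      if i < d ! Suc k then
        (if j < d ! k then (W ! k) i j else if j = d ! k then (b ! k) i else 0)
      else if Suc k < length d - 1 \<and> i = d ! Suc k \<and> j = d ! k then 1 else 0)
    [0..<length d - 1]"

end

theory Submission
  imports Defs
begin

text \<open>
Appending a constant neuron to the input and to every hidden layer turns the PNN into a
homogeneous network: if the extra input coordinate t is nonzero, the augmented hPNN computes
t^(r_1 \<dots> r_{L-1}) p_{w,b}(x/t). Hence two PNNs computing the same function give augmented
hPNNs computing the same function (at t = 0 by continuity), and uniqueness of the augmented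
hPNN yields permutations and scalings relating them. The equivalence restricts to the original
weights and biases once every permutation fixes the constant neuron. At the last hidden layer,
the neuron mapped to the constant neuron is a nonzero multiple of it as a function; if it were
another neuron, weight could be shifted between the two corresponding columns of the output
matrix without changing the function, but changing the number of zero columns, which
equivalence preserves. The fixed point propagates to lower layers because the constant row of
each augmented matrix is a unit vector.
\<close>

lemma bij_betw_lessThan_Suc_fixed:
  assumes "bij_betw f {..<Suc n} {..<Suc n}" "f n = n"
  shows "bij_betw f {..<n} {..<n}"
proof -
  have "bij_betw f ({..<Suc n} - {n}) ({..<Suc n} - {n})"
    using assms by (intro bij_betw_DiffI) (auto simp: bij_betw_def)
  moreover have "{..<Suc n} - {n} = {..<n}" by auto
  ultimately show ?thesis by simp
qed

definition pnn_prefix ::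
  "nat list \<Rightarrow> nat list \<Rightarrow> (nat \<Rightarrow> nat \<Rightarrow> real) list \<Rightarrow> (nat \<Rightarrow> real) list
   \<Rightarrow> nat \<Rightarrow> (nat \<Rightarrow> real) \<Rightarrow> (nat \<Rightarrow> real)" where
  "pnn_prefix d r W b k x = fold (layer_apply d r W b) [0..<k] x"

lemma pnn_prefix_0 [simp]: "pnn_prefix d r W b 0 x = x"
  by (simp add: pnn_prefix_def)

lemma pnn_prefix_Suc:
  "pnn_prefix d r W b (Suc k) x = layer_apply d r W b k (pnn_prefix d r W b k x)"
  by (simp add: pnn_prefix_def)

lemma pnn_eval_eq_prefix: "pnn_eval d r W b x = pnn_prefix d r W b (length d - 1) x"
  by (simp add: pnn_prefix_def pnn_eval_def)

lemma hpnn_eval_eq_prefix: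
  "hpnn_eval d r W x = pnn_prefix d r W (zero_biases d) (length d - 1) x"
  by (simp add: hpnn_eval_def pnn_eval_eq_prefix)

lemma pnn_prefix_cong:
  "(\<And>k'. k' < k \<Longrightarrow> W ! k' = W' ! k') \<Longrightarrow> pnn_prefix d r W b k x = pnn_prefix d r W' b k x"
  by (induction k) (auto simp: pnn_prefix_Suc layer_apply_def)

lemma pnn_prefix_tendsto:
  assumes "\<And>j. (\<lambda>n. X n j) \<longlonglongrightarrow> x j"
  shows "(\<lambda>n. pnn_prefix d r W b k (X n) i) \<longlonglongrightarrow> pnn_prefix d r W b k x i"
proof (induction k arbitrary: i)
  case (Suc k)
  then show ?case
    unfolding pnn_prefix_Suc layer_apply_def Let_def by (auto intro!: tendsto_intros)
qed (simp add: assms)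

lemma layer_apply_hidden:
  "Suc k < length d - 1 \<Longrightarrow> i < d ! Suc k \<Longrightarrow>
   layer_apply d r W b k v i = ((\<Sum>j<d ! k. (W ! k) i j * v j) + (b ! k) i) ^ (r ! k)"
  by (simp add: layer_apply_def)

lemma layer_apply_output:
  "Suc k = length d - 1 \<Longrightarrow> i < d ! Suc k \<Longrightarrow>
   layer_apply d r W b k v i = (\<Sum>j<d ! k. (W ! k) i j * v j) + (b ! k) i"
  by (simp add: layer_apply_def)

lemma layer_apply_outside: "d ! Suc k \<le> i \<Longrightarrow> layer_apply d r W b k v i = 0"
  by (simp add: layer_apply_def)

lemma zero_biases_nth [simp]: "k < length d - 1 \<Longrightarrow> zero_biases d ! k = (\<lambda>_. 0)"
  by (simp add: zero_biases_def)

lemma hpnn_eval_last_layer: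
  assumes "length d \<ge> 2"
  shows "hpnn_eval d r W x k = (if k < d ! (length d - 1) then
     (\<Sum>j<d ! (length d - 2). (W ! (length d - 2)) k j *
        pnn_prefix d r W (zero_biases d) (length d - 2) x j) else 0)"
proof -
  have L: "length d - 1 = Suc (length d - 2)" using assms by simp
  show ?thesis
    unfolding hpnn_eval_eq_prefix L pnn_prefix_Suc
    using L by (simp add: layer_apply_output layer_apply_outside)
qed

locale hpnn_equiv_witness =
  fixes d r :: "nat list" and A A' :: "(nat \<Rightarrow> nat \<Rightarrow> real) list"
    and \<pi> :: "nat \<Rightarrow> nat \<Rightarrow> nat" and c :: "nat \<Rightarrow> nat \<Rightarrow> real"
  assumes perm_first: "\<forall>i. \<pi> 0 i = i" and perm_last: "\<forall>i. \<pi> (length d - 1) i = i"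
    and scale_first: "\<forall>i. c 0 i = 1" and scale_last: "\<forall>i. c (length d - 1) i = 1"
    and hidden: "\<forall>l\<in>{1..<length d - 1}.
      bij_betw (\<pi> l) {..<d ! l} {..<d ! l} \<and> (\<forall>i<d ! l. c l i \<noteq> 0)"
    and weights: "\<forall>l\<in>{1..length d - 1}. \<forall>i<d ! l. \<forall>j<d ! (l - 1).
      (A' ! (l - 1)) (\<pi> l i) (\<pi> (l - 1) j)
        = c l i * (A ! (l - 1)) i j / (if l = 1 then 1 else c (l - 1) j ^ (r ! (l - 2)))"

lemma hpnn_equivE:
  assumes "hpnn_equiv d r A A'"
  obtains \<pi> c where "hpnn_equiv_witness d r A A' \<pi> c"
  using assms unfolding hpnn_equiv_def pnn_equiv_def Let_def hpnn_equiv_witness_def by blast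

lemma hpnn_uniqueE:
  assumes "hpnn_unique d r A" and "length A' = length d - 1"
    and "\<And>x. hpnn_eval d r A' x = hpnn_eval d r A x"
  obtains \<pi> c where "hpnn_equiv_witness d r A A' \<pi> c"
  using assms hpnn_equivE unfolding hpnn_unique_def by blast

definition zero_columns :: "nat \<Rightarrow> nat \<Rightarrow> (nat \<Rightarrow> nat \<Rightarrow> real) \<Rightarrow> nat set" where
  "zero_columns m n M = {j. j < n \<and> (\<forall>i<m. M i j = 0)}"

context hpnn_equiv_witness
begin

text \<open>The diagonal of D_l^{r_l} (with D_0^{r_0} = I), indexed by neurons of layer l.\<close>

definition scale_pow :: "nat \<Rightarrow> nat \<Rightarrow> real" where
  "scale_pow l j = (if l = 0 then 1 else c l j ^ (r ! (l - 1)))"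

lemma perm_bij: "l \<le> length d - 1 \<Longrightarrow> bij_betw (\<pi> l) {..<d ! l} {..<d ! l}"
proof -
  assume l: "l \<le> length d - 1"
  consider "l = 0" | "l = length d - 1" | "l \<in> {1..<length d - 1}" using l by fastforce
  then show ?thesis
  proof cases
    case 1
    then have "\<pi> l = id" using perm_first by auto
    then show ?thesis by simp
  next
    case 2
    then have "\<pi> l = id" using perm_last by auto
    then show ?thesis by simp
  qed (use hidden in blast)
qed

lemma perm_less: "l \<le> length d - 1 \<Longrightarrow> i < d ! l \<Longrightarrow> \<pi> l i < d ! l"
  using perm_bij bij_betwE by blast

lemma scale_nonzero: "l \<le> length d - 1 \<Longrightarrow> i < d ! l \<Longrightarrow> c l i \<noteq> 0"
proof -
  assume l: "l \<le> length d - 1" and i: "i < d ! l"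
  consider "l = 0" | "l = length d - 1" | "l \<in> {1..<length d - 1}" using l by fastforce
  then show ?thesis using scale_first scale_last hidden i by cases auto
qed

lemma scale_pow_nonzero: "l \<le> length d - 1 \<Longrightarrow> j < d ! l \<Longrightarrow> scale_pow l j \<noteq> 0"
  by (simp add: scale_pow_def scale_nonzero)

lemma weight_eq:
  assumes "k < length d - 1" "i < d ! Suc k" "j < d ! k"
  shows "(A' ! k) (\<pi> (Suc k) i) (\<pi> k j) = c (Suc k) i * (A ! k) i j / scale_pow k j"
  using weights assms unfolding scale_pow_def
  by (cases k) (auto dest!: bspec[of _ _ "Suc k"])

lemma prefix_eq:
  assumes "k < length d - 1" "j < d ! k"
  shows "pnn_prefix d r A' (zero_biases d) k x (\<pi> k j)
       = scale_pow k j * pnn_prefix d r A (zero_biases d) k x j"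
  using assms
proof (induction k arbitrary: j)
  case 0
  then show ?case using perm_first by (simp add: scale_pow_def)
next
  case (Suc k)
  let ?v = "pnn_prefix d r A (zero_biases d) k x"
  let ?v' = "pnn_prefix d r A' (zero_biases d) k x"
  have k: "k < length d - 1" using Suc.prems by simp
  have "(\<Sum>j'<d ! k. (A' ! k) (\<pi> (Suc k) j) j' * ?v' j')
      = (\<Sum>j'<d ! k. (A' ! k) (\<pi> (Suc k) j) (\<pi> k j') * ?v' (\<pi> k j'))"
    by (rule sum.reindex_bij_betw[OF perm_bij, symmetric]) (use k in simp)
  also have "\<dots> = c (Suc k) j * (\<Sum>j'<d ! k. (A ! k) j j' * ?v j')"
    unfolding sum_distrib_left
    using Suc k by (intro sum.cong) (simp_all add: weight_eq scale_pow_nonzero)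
  finally show ?case
    using Suc.prems perm_less[of "Suc k" j]
    by (simp add: pnn_prefix_Suc layer_apply_hidden scale_pow_def power_mult_distrib)
qed

lemma zero_columns_last:
  assumes "length d \<ge> 2"
  defines "m \<equiv> length d - 2"
  shows "bij_betw (\<pi> m) (zero_columns (d ! Suc m) (d ! m) (A ! m))
           (zero_columns (d ! Suc m) (d ! m) (A' ! m))"
proof -
  have m: "m < length d - 1" "Suc m = length d - 1" using assms by auto
  have zero_iff: "(A' ! m) i (\<pi> m j) = 0 \<longleftrightarrow> (A ! m) i j = 0" if "i < d ! Suc m" "j < d ! m" for i j
    using weight_eq[OF m(1) that] perm_last scale_last scale_pow_nonzero[of m j] m that by simp
  have "zero_columns (d ! Suc m) (d ! m) (A' ! m) = \<pi> m ` zero_columns (d ! Suc m) (d ! m) (A ! m)"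
  proof (intro equalityI subsetI)
    fix j' assume j': "j' \<in> zero_columns (d ! Suc m) (d ! m) (A' ! m)"
    then obtain j where "j < d ! m" "j' = \<pi> m j"
      using perm_bij[of m] m unfolding zero_columns_def bij_betw_def by auto
    then show "j' \<in> \<pi> m ` zero_columns (d ! Suc m) (d ! m) (A ! m)"
      using j' zero_iff unfolding zero_columns_def by auto
  qed (use zero_iff perm_less m in \<open>auto simp: zero_columns_def\<close>)
  then show ?thesis
    using perm_bij[of m] m by (auto intro: bij_betw_subset simp: zero_columns_def)
qed

end

section \<open>Obstructions to uniqueness\<close>

lemma hpnn_unique_zero_columns_last:
  assumes d: "length d \<ge> 2" and lA: "length A = length d - 1"
    and uniq: "hpnn_unique d r A"
  defines "m \<equiv> length d - 2"
  assumes same_output: "\<And>x i. i < d ! Suc m \<Longrightarrow>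
      (\<Sum>j<d ! m. M i j * pnn_prefix d r A (zero_biases d) m x j)
    = (\<Sum>j<d ! m. (A ! m) i j * pnn_prefix d r A (zero_biases d) m x j)"
  shows "card (zero_columns (d ! Suc m) (d ! m) M)
       = card (zero_columns (d ! Suc m) (d ! m) (A ! m))"
proof -
  have m: "m < length d - 1" "Suc m = length d - 1" using d unfolding m_def by auto
  let ?A' = "A[m := M]"
  have prefix: "pnn_prefix d r ?A' (zero_biases d) m x = pnn_prefix d r A (zero_biases d) m x" for x
    by (rule pnn_prefix_cong) simp
  have "hpnn_eval d r ?A' x i = hpnn_eval d r A x i" for x i
    unfolding hpnn_eval_last_layer[OF d] m_def[symmetric] prefix
    using m lA same_output by simp
  then obtain \<pi> c where "hpnn_equiv_witness d r A ?A' \<pi> c"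
    using hpnn_uniqueE[OF uniq] lA by (metis ext length_list_update)
  from hpnn_equiv_witness.zero_columns_last[OF this d] show ?thesis
    using m lA by (simp add: m_def bij_betw_same_card)
qed

text \<open>
As neuron i is \<gamma> times neuron i', replacing columns i and i' of the output matrix by w and
by column i' + \<gamma> (column i - w) keeps the function; for suitable w, fewer columns vanish.
\<close>

lemma proportional_neurons_not_hpnn_unique:
  assumes d: "length d \<ge> 2" and lA: "length A = length d - 1"
  defines "m \<equiv> length d - 2"
  assumes out: "0 < d ! Suc m"
    and i: "i < d ! m" "i' < d ! m" "i \<noteq> i'" and \<gamma>: "\<gamma> \<noteq> 0"
    and proportional: "\<And>x. pnn_prefix d r A (zero_biases d) m x i
                         = \<gamma> * pnn_prefix d r A (zero_biases d) m x i'"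
  shows "\<not> hpnn_unique d r A"
proof
  assume uniq: "hpnn_unique d r A"
  define s where "s k = (A ! m) k i' + \<gamma> * (A ! m) k i" for k
  define M where "M w = (\<lambda>k j. if j = i then w k
      else if j = i' then s k - \<gamma> * w k else (A ! m) k j)"
    for w :: "nat \<Rightarrow> real"
  define Z where "Z N = zero_columns (d ! Suc m) (d ! m) N" for N
  have same_output: "(\<Sum>j<d ! m. M w k j * pnn_prefix d r A (zero_biases d) m x j)
      = (\<Sum>j<d ! m. (A ! m) k j * pnn_prefix d r A (zero_biases d) m x j)" for w k x
  proof -
    let ?v = "pnn_prefix d r A (zero_biases d) m x"
    have "(\<Sum>j<d ! m. M w k j * ?v j) = (\<Sum>j<d ! m. (A ! m) k j * ?v j
        + (if j = i then (w k - (A ! m) k i) * ?v i else 0)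
        + (if j = i' then (s k - \<gamma> * w k - (A ! m) k i') * ?v i' else 0))"
      using i by (intro sum.cong) (auto simp: M_def algebra_simps)
    also have "\<dots> = (\<Sum>j<d ! m. (A ! m) k j * ?v j)"
      using i proportional[of x] by (simp add: sum.distrib s_def algebra_simps)
    finally show ?thesis .
  qed
  have card_Z: "card (Z (M w)) = card (Z (A ! m))" for w
    using hpnn_unique_zero_columns_last[OF d lA uniq] same_output unfolding Z_def m_def by blast
  define a where "a = \<bar>s 0 / \<gamma>\<bar> + 1"
  have "a \<noteq> 0" using abs_ge_zero[of "s 0 / \<gamma>"] unfolding a_def by linarith
  moreover have "s 0 - \<gamma> * a \<noteq> 0"
  proof
    assume "s 0 - \<gamma> * a = 0"
    then have "s 0 / \<gamma> = a" using \<gamma> by (simp add: field_simps)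
    then show False unfolding a_def by linarith
  qed
  ultimately have "Z (M (\<lambda>k. if k = 0 then a else 0)) \<subseteq> Z (M (\<lambda>_. 0)) - {i}"
    using out unfolding Z_def zero_columns_def M_def by auto
  moreover have "i \<in> Z (M (\<lambda>_. 0))"
    using i unfolding Z_def zero_columns_def M_def by auto
  ultimately have "card (Z (M (\<lambda>k. if k = 0 then a else 0))) < card (Z (M (\<lambda>_. 0)))"
    by (intro psubset_card_mono) (auto simp: Z_def zero_columns_def)
  then show False using card_Z by simp
qed

lemma hpnn_unique_no_outputs_weights_zero:
  assumes no_outputs: "d ! (length d - 1) = 0" and uniq: "hpnn_unique d r A"
    and k: "k < length d - 1" and ij: "i < d ! Suc k" "j < d ! k"
  shows "(A ! k) i j = 0"
proof -
  let ?N = "replicate (length d - 1) (\<lambda>_ _. 0)"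
  have "hpnn_eval d r ?N x = hpnn_eval d r A x" for x
    using k no_outputs by (simp add: fun_eq_iff hpnn_eval_last_layer)
  then obtain \<pi> c where "hpnn_equiv_witness d r A ?N \<pi> c"
    by (elim hpnn_uniqueE[OF uniq, rotated]) auto
  from hpnn_equiv_witness.weight_eq[OF this k ij]
    hpnn_equiv_witness.scale_nonzero[OF this, of "Suc k" i]
    hpnn_equiv_witness.scale_pow_nonzero[OF this, of k j]
  show ?thesis using k ij by simp
qed

section \<open>The augmented network\<close>

lemma length_aug_arch [simp]: "d \<noteq> [] \<Longrightarrow> length (aug_arch d) = length d"
  by (simp add: aug_arch_def)

lemma aug_arch_nth: "k < length d - 1 \<Longrightarrow> aug_arch d ! k = Suc (d ! k)"
  by (simp add: aug_arch_def nth_append nth_butlast)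

lemma aug_arch_last: "d \<noteq> [] \<Longrightarrow> aug_arch d ! (length d - 1) = d ! (length d - 1)"
  by (simp add: aug_arch_def nth_append last_conv_nth)

lemma length_aug_weights [simp]: "length (aug_weights d W b) = length d - 1"
  by (simp add: aug_weights_def)

lemma aug_weights_nth:
  "k < length d - 1 \<Longrightarrow> aug_weights d W b ! k = (\<lambda>i j.
      if i < d ! Suc k then
        (if j < d ! k then (W ! k) i j else if j = d ! k then (b ! k) i else 0)
      else if Suc k < length d - 1 \<and> i = d ! Suc k \<and> j = d ! k then 1 else 0)"
  unfolding aug_weights_def by (simp only: nth_map length_upt nth_upt add_0 diff_zero)

lemma sum_aug_row:
  assumes "k < length d - 1" "i < d ! Suc k"
  shows "(\<Sum>j<Suc (d ! k). (aug_weights d W b ! k) i j * v j)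
       = (\<Sum>j<d ! k. (W ! k) i j * v j) + (b ! k) i * v (d ! k)"
  using assms by (simp add: aug_weights_nth)

lemma sum_aug_const_row:
  assumes "Suc k < length d - 1"
  shows "(\<Sum>j<Suc (d ! k). (aug_weights d W b ! k) (d ! Suc k) j * v j) = v (d ! k)"
  using assms by (simp add: aug_weights_nth)

abbreviation aug_prefix where
  "aug_prefix d r W b \<equiv> pnn_prefix (aug_arch d) r (aug_weights d W b) (zero_biases (aug_arch d))"

lemma layer_apply_aug_const:
  assumes "Suc k < length d - 1"
  shows "layer_apply (aug_arch d) r (aug_weights d W b) (zero_biases (aug_arch d)) k v (d ! Suc k)
       = v (d ! k) ^ (r ! k)"
proof -
  have "d \<noteq> []" using assms by auto
  then show ?thesis
    using assms sum_aug_const_row[OF assms]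
    by (simp add: layer_apply_hidden aug_arch_nth del: sum.lessThan_Suc)
qed

lemma layer_apply_aug_scaled:
  assumes k: "k < length d - 1" and i: "i < d ! Suc k"
    and scaled: "\<And>j. j < d ! k \<Longrightarrow> v j = s * w j" and const: "v (d ! k) = s"
  shows "layer_apply (aug_arch d) r (aug_weights d W b) (zero_biases (aug_arch d)) k v i
       = (if Suc k < length d - 1 then s ^ (r ! k) else s) * layer_apply d r W b k w i"
proof -
  have d: "d \<noteq> []" using k by auto
  have "(\<Sum>j<d ! k. (W ! k) i j * v j) = s * (\<Sum>j<d ! k. (W ! k) i j * w j)"
    unfolding sum_distrib_left using scaled by (intro sum.cong) simp_all
  then have "(\<Sum>j<Suc (d ! k). (aug_weights d W b ! k) i j * v j)
      = s * ((\<Sum>j<d ! k. (W ! k) i j * w j) + (b ! k) i)"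
    using sum_aug_row[OF k i] const by (simp add: algebra_simps del: sum.lessThan_Suc)
  moreover have "aug_arch d ! k = Suc (d ! k)" using k by (rule aug_arch_nth)
  moreover have "i < aug_arch d ! Suc k"
  proof (cases "Suc k < length d - 1")
    case False
    then have "Suc k = length d - 1" using k by simp
    then show ?thesis using i aug_arch_last[OF d] by simp
  qed (use i aug_arch_nth[of "Suc k" d] in simp)
  ultimately show ?thesis
    using k i d
    by (cases "Suc k < length d - 1")
       (simp_all add: layer_apply_hidden layer_apply_output power_mult_distrib
         del: sum.lessThan_Suc)
qed

lemma aug_prefix_const:
  "k < length d - 1 \<Longrightarrow> aug_prefix d r W b k x (d ! k) = x (d ! 0) ^ (\<Prod>l<k. r ! l)"
  by (induction k) (simp_all add: pnn_prefix_Suc layer_apply_aug_const power_mult)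

lemma aug_prefix_homogeneous:
  assumes t: "x (d ! 0) \<noteq> 0"
  shows "k < length d - 1 \<Longrightarrow> i < d ! k \<Longrightarrow>
    aug_prefix d r W b k x i
      = x (d ! 0) ^ (\<Prod>l<k. r ! l) * pnn_prefix d r W b k (\<lambda>j. x j / x (d ! 0)) i"
proof (induction k arbitrary: i)
  case 0
  then show ?case using t by simp
next
  case (Suc k)
  then show ?case
    by (simp add: pnn_prefix_Suc layer_apply_aug_scaled aug_prefix_const power_mult)
qed

lemma hpnn_aug_eval_homogeneous:
  assumes d: "length d \<ge> 2" and t: "x (d ! 0) \<noteq> 0"
  shows "hpnn_eval (aug_arch d) r (aug_weights d W b) x i
       = x (d ! 0) ^ (\<Prod>l<length d - 2. r ! l) * pnn_eval d r W b (\<lambda>j. x j / x (d ! 0)) i"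
proof -
  define m where "m = length d - 2"
  have "d \<noteq> []" and L: "length d - 1 = Suc m" using d unfolding m_def by auto
  then have "length (aug_arch d) - 1 = Suc m" "aug_arch d ! Suc m = d ! Suc m"
    using aug_arch_last[of d] by auto
  then show ?thesis
    unfolding hpnn_eval_eq_prefix pnn_eval_eq_prefix L m_def[symmetric]
    using L t
    by (cases "i < d ! Suc m")
       (simp_all add: pnn_prefix_Suc layer_apply_aug_scaled aug_prefix_const aug_prefix_homogeneous
         layer_apply_outside)
qed

lemma hpnn_aug_eval_eqI:
  assumes d: "length d \<ge> 2" and same: "\<And>x. pnn_eval d r W' b' x = pnn_eval d r W b x"
  shows "hpnn_eval (aug_arch d) r (aug_weights d W' b') x
       = hpnn_eval (aug_arch d) r (aug_weights d W b) x"
proof -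
  have affine: "hpnn_eval (aug_arch d) r (aug_weights d W' b') y
              = hpnn_eval (aug_arch d) r (aug_weights d W b) y"
    if "y (d ! 0) \<noteq> 0" for y
    using that by (simp add: fun_eq_iff hpnn_aug_eval_homogeneous[OF d] same)
  show ?thesis
  proof (cases "x (d ! 0) = 0")
    case True
    define X where "X n = x(d ! 0 := 1 / real (Suc n))" for n
    have "(\<lambda>n. X n j) \<longlonglongrightarrow> x j" for j
      using True LIMSEQ_Suc[OF lim_inverse_n']
      by (cases "j = d ! 0") (simp_all add: X_def divide_inverse)
    then have lim: "(\<lambda>n. hpnn_eval (aug_arch d) r A (X n) i) \<longlonglongrightarrow> hpnn_eval (aug_arch d) r A x i"
      for A i
      unfolding hpnn_eval_eq_prefix by (rule pnn_prefix_tendsto)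
    have "hpnn_eval (aug_arch d) r (aug_weights d W' b') (X n)
        = hpnn_eval (aug_arch d) r (aug_weights d W b) (X n)" for n
      by (rule affine) (simp add: X_def)
    then have "(\<lambda>n. hpnn_eval (aug_arch d) r (aug_weights d W b) (X n) i)
        \<longlonglongrightarrow> hpnn_eval (aug_arch d) r (aug_weights d W' b') x i" for i
      using lim[of "aug_weights d W' b'" i] by simp
    then show ?thesis
      using lim[of "aug_weights d W b"] LIMSEQ_unique by blast
  qed (rule affine)
qed

locale aug_hpnn_equiv_witness =
  hpnn_equiv_witness "aug_arch d" r "aug_weights d W b" "aug_weights d W' b'" \<pi> c
  for d r W b W' b' \<pi> c +
  assumes two_layers: "length d \<ge> 2"
    and unique: "hpnn_unique (aug_arch d) r (aug_weights d W b)"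
begin

lemma nonempty: "d \<noteq> []"
  using two_layers by auto

lemma length_aug [simp]: "length (aug_arch d) = length d"
  using nonempty by simp

lemma aug_last: "aug_arch d ! (length d - 1) = d ! (length d - 1)"
  using nonempty by (rule aug_arch_last)

lemma const_neuron_preimage:
  assumes l: "l < length d - 1" and i: "i < aug_arch d ! l" "\<pi> l i = d ! l"
  shows "aug_prefix d r W b l x i = aug_prefix d r W b l x (d ! l) / scale_pow l i"
proof -
  have "scale_pow l i * aug_prefix d r W b l x i = aug_prefix d r W' b' l x (d ! l)"
    using prefix_eq[of l i x] l i by simp
  also have "\<dots> = aug_prefix d r W b l x (d ! l)"
    using l by (simp add: aug_prefix_const)
  finally show ?thesis
    using scale_pow_nonzero[of l i] l i by (simp add: field_simps)
qed

lemma perm_fixes_const_top: "\<pi> (length d - 2) (d ! (length d - 2)) = d ! (length d - 2)"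
proof (rule ccontr)
  define m where "m = length d - 2"
  assume not_fixed: "\<pi> (length d - 2) (d ! (length d - 2)) \<noteq> d ! (length d - 2)"
  then have "m \<noteq> 0" using perm_first unfolding m_def by auto
  then have m: "0 < m" "m < length d - 1" "Suc m = length d - 1"
    using two_layers unfolding m_def by auto
  have "d ! m \<in> \<pi> m ` {..<aug_arch d ! m}"
    using perm_bij[of m] m aug_arch_nth[of m d] unfolding bij_betw_def by auto
  then obtain i where i: "i < aug_arch d ! m" "\<pi> m i = d ! m" by auto
  with not_fixed have "i \<noteq> d ! m" unfolding m_def by auto
  show False
  proof (cases "d ! Suc m = 0")
    case True
    \<comment> \<open>without outputs all networks agree, so uniqueness forces all weights to vanish\<close>
    have "(aug_weights d W b ! 0) (d ! 1) (d ! 0) = 0"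
      using True m aug_last aug_arch_nth[of 0 d] aug_arch_nth[of 1 d]
      by (intro hpnn_unique_no_outputs_weights_zero[OF _ unique]) simp_all
    then show False using m by (simp add: aug_weights_nth)
  next
    case False
    have "\<not> hpnn_unique (aug_arch d) r (aug_weights d W b)"
    proof (rule proportional_neurons_not_hpnn_unique)
      show "aug_prefix d r W b (length (aug_arch d) - 2) x i
          = 1 / scale_pow m i * aug_prefix d r W b (length (aug_arch d) - 2) x (d ! m)" for x
        using const_neuron_preimage[OF m(2) i] by (simp add: m_def)
    qed (use False m i \<open>i \<noteq> d ! m\<close> scale_pow_nonzero[of m i] aug_arch_nth[of m d] aug_last
         in \<open>simp_all add: m_def\<close>)
    then show False using unique by simp
  qed
qed

lemma perm_fixes_const_step:
  assumes l: "Suc l < length d - 1" and fixed: "\<pi> (Suc l) (d ! Suc l) = d ! Suc l"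
  shows "\<pi> l (d ! l) = d ! l"
proof -
  have sizes: "aug_arch d ! Suc l = Suc (d ! Suc l)" "aug_arch d ! l = Suc (d ! l)"
    using l aug_arch_nth by auto
  have "(aug_weights d W' b' ! l) (d ! Suc l) (\<pi> l (d ! l))
      = c (Suc l) (d ! Suc l) / scale_pow l (d ! l)"
    using weight_eq[of l "d ! Suc l" "d ! l"] fixed l sizes by (simp add: aug_weights_nth)
  also have "\<dots> \<noteq> 0"
    using scale_nonzero[of "Suc l" "d ! Suc l"] scale_pow_nonzero[of l "d ! l"] l sizes by simp
  finally show ?thesis
    using l by (simp add: aug_weights_nth split: if_splits)
qed

lemma perm_fixes_const: "l < length d - 1 \<Longrightarrow> \<pi> l (d ! l) = d ! l"
proof -
  assume "l < length d - 1"
  then have "l \<le> length d - 2" by simp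
  then show ?thesis
  proof (induction rule: inc_induct)
    case base
    show ?case by (rule perm_fixes_const_top)
  next
    case (step l)
    then show ?case using perm_fixes_const_step by simp
  qed
qed

lemma scale_const: "l < length d - 1 \<Longrightarrow> c l (d ! l) = 1"
proof (induction l)
  case 0
  then show ?case using scale_first by simp
next
  case (Suc l)
  have sizes: "aug_arch d ! Suc l = Suc (d ! Suc l)" "aug_arch d ! l = Suc (d ! l)"
    using Suc.prems aug_arch_nth by auto
  have "1 = (aug_weights d W' b' ! l) (\<pi> (Suc l) (d ! Suc l)) (\<pi> l (d ! l))"
    using Suc.prems perm_fixes_const by (simp add: aug_weights_nth)
  also have "\<dots> = c (Suc l) (d ! Suc l)"
    using weight_eq[of l "d ! Suc l" "d ! l"] Suc sizes
    by (simp add: aug_weights_nth scale_pow_def)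
  finally show ?case by simp
qed

lemma perm_bij_restrict: "l \<le> length d - 1 \<Longrightarrow> bij_betw (\<pi> l) {..<d ! l} {..<d ! l}"
  using perm_bij[of l] aug_last aug_arch_nth[of l d] perm_fixes_const[of l]
  by (cases "l = length d - 1") (auto intro: bij_betw_lessThan_Suc_fixed)

lemma less_aug_arch: "l \<le> length d - 1 \<Longrightarrow> i < d ! l \<Longrightarrow> i < aug_arch d ! l"
  using aug_last aug_arch_nth[of l d] by (cases "l = length d - 1") auto

lemma perm_less_restrict: "l \<le> length d - 1 \<Longrightarrow> i < d ! l \<Longrightarrow> \<pi> l i < d ! l"
  using perm_bij_restrict bij_betwE by blast

lemma weight_restrict:
  assumes k: "k < length d - 1" and ij: "i < d ! Suc k" "j < d ! k"
  shows "(W' ! k) (\<pi> (Suc k) i) (\<pi> k j) = c (Suc k) i * (W ! k) i j / scale_pow k j"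
  using weight_eq[of k i j] less_aug_arch[of "Suc k" i] less_aug_arch[of k j]
    perm_less_restrict[of "Suc k" i] perm_less_restrict[of k j] assms
  by (simp add: aug_weights_nth)

lemma bias_restrict:
  assumes k: "k < length d - 1" and i: "i < d ! Suc k"
  shows "(b' ! k) (\<pi> (Suc k) i) = c (Suc k) i * (b ! k) i"
proof -
  have "d ! k < aug_arch d ! k" using k aug_arch_nth by simp
  then show ?thesis
    using weight_eq[of k i "d ! k"] less_aug_arch[of "Suc k" i] perm_less_restrict[of "Suc k" i]
      perm_fixes_const[OF k] scale_const[OF k] assms
    by (simp add: aug_weights_nth scale_pow_def)
qed

lemma pnn_equiv: "pnn_equiv d r W b W' b'"
proof -
  have hidden_layers: "bij_betw (\<pi> l) {..<d ! l} {..<d ! l} \<and> (\<forall>i<d ! l. c l i \<noteq> 0)"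
    if "l \<in> {1..<length d - 1}" for l
    using that perm_bij_restrict scale_nonzero less_aug_arch by auto
  have weight_rel: "(W' ! (l - 1)) (\<pi> l i) (\<pi> (l - 1) j)
      = c l i * (W ! (l - 1)) i j / (if l = 1 then 1 else c (l - 1) j ^ (r ! (l - 2)))"
    if "l \<in> {1..length d - 1}" "i < d ! l" "j < d ! (l - 1)" for l i j
    using that weight_restrict[of "l - 1" i j] by (cases l) (simp_all add: scale_pow_def)
  have bias_rel: "(b' ! (l - 1)) (\<pi> l i) = c l i * (b ! (l - 1)) i"
    if "l \<in> {1..length d - 1}" "i < d ! l" for l i
    using that bias_restrict[of "l - 1" i] by (cases l) simp_all
  show ?thesis
    unfolding pnn_equiv_def Let_def
    using perm_first perm_last scale_first scale_last hidden_layers weight_rel bias_rel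
    by (intro exI[of _ \<pi>] exI[of _ c]) simp
qed

end

theorem mainTheorem17:
  fixes d r :: "nat list" and W :: "(nat \<Rightarrow> nat \<Rightarrow> real) list" and b :: "(nat \<Rightarrow> real) list"
  assumes "length d \<ge> 2"
    and "length r = length d - 2"
    and "length W = length d - 1"
    and "length b = length d - 1"
    and "hpnn_unique (aug_arch d) r (aug_weights d W b)"
  shows "pnn_unique d r W b"
  unfolding pnn_unique_def
proof (intro allI impI)
  fix W' b'
  assume "\<forall>x. pnn_eval d r W' b' x = pnn_eval d r W b x"
  then have "hpnn_eval (aug_arch d) r (aug_weights d W' b') x
           = hpnn_eval (aug_arch d) r (aug_weights d W b) x" for x
    using hpnn_aug_eval_eqI[OF assms(1)] by blast
  moreover have "length (aug_weights d W' b') = length (aug_arch d) - 1"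
    using assms(1) by (subst length_aug_arch) auto
  ultimately obtain \<pi> c
    where "hpnn_equiv_witness (aug_arch d) r (aug_weights d W b) (aug_weights d W' b') \<pi> c"
    using hpnn_uniqueE[OF assms(5)] by blast
  with assms(1,5) interpret aug_hpnn_equiv_witness d r W b W' b' \<pi> c
    by (simp add: aug_hpnn_equiv_witness_def aug_hpnn_equiv_witness_axioms_def)
  show "pnn_equiv d r W b W' b'" by (rule pnn_equiv)
qed

end
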